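(* Let $K$ be a field equipped with a field endomorphism $\sigma$, and for a matrix $E$ over $K$ and $j\in\mathbb{N}$ let $E^{(j)}$ denote $E$ with $\sigma^j$ applied entrywise. Let $E_1,\ldots,E_t\in K^{p\times q}$ with $t\ge1$. For $k\ge1$ let $N_k$ be the $k\times k$ block matrix (blocks of size $p\times q$) whose block in block row $a$ and block column $b$ ($0\le a,b\le k-1$) is $E_{a-b+1}^{(a)}$ if $0\le a-b\le t-1$ and zero otherwise; i.e. \[N_k=\begin{pmatrix} E_1&&&&&\\ E_2^{(1)}&E_1^{(1)}&&&&\\ \vdots&\vdots&\ddots&&&\\ E_t^{(t-1)}&E_{t-1}^{(t-1)}&\cdots&E_1^{(t-1)}&&\\ &\ddots&\ddots&\ddots&\ddots&\\ &&E_t^{(k-1)}&E_{t-1}^{(k-1)}&\cdots&E_1^{(k-1)} \end{pmatrix}.\] Then there exist $d'\in\mathbb{N}$ and $a'\in\mathbb{Z}$ such that $\operatorname{rank}_K(N_k)=d'k+a'$ for all sufficiently large $k$. Moreover, the least $k_0$ such that this equality holds for all $k\ge k_0$ is at most $(t-1)(\min\{p,q\}+2)$. *)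

theory Defs
  imports "Jordan_Normal_Form.DL_Rank"
begin

definition field_endo :: "('a::field \<Rightarrow> 'a) \<Rightarrow> bool" where
  "field_endo \<sigma> \<longleftrightarrow> \<sigma> 1 = 1 \<and> (\<forall>x y. \<sigma> (x + y) = \<sigma> x + \<sigma> y) \<and> (\<forall>x y. \<sigma> (x * y) = \<sigma> x * \<sigma> y)"

definition mat_rank :: "'a::field mat \<Rightarrow> nat" where
  "mat_rank A = vec_space.rank (dim_row A) A"

definition twist :: "('a \<Rightarrow> 'a) \<Rightarrow> nat \<Rightarrow> 'a mat \<Rightarrow> 'a mat" where
  "twist \<sigma> j E = map_mat (\<sigma> ^^ j) E"

definition Nmat :: "('a::field \<Rightarrow> 'a) \<Rightarrow> (nat \<Rightarrow> 'a mat) \<Rightarrow> nat \<Rightarrow> nat \<Rightarrow> nat \<Rightarrow> nat \<Rightarrow> 'a mat" where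
  "Nmat \<sigma> E t p q k = mat (k * p) (k * q) (\<lambda>(i, j).
     (let a = i div p; b = j div q in
      if b \<le> a \<and> a - b \<le> t - 1 then twist \<sigma> a (E (a - b + 1)) $$ (i mod p, j mod q) else 0))"

end

theory Submission
  imports Defs "HOL-Library.Function_Algebras"
begin

text \<open>
  Let \<open>r k = rank N\<^sub>k\<close> and view every \<open>N\<^sub>k\<close> as the leading corner of one infinite
  block band matrix \<open>N\<^sub>\<infinity>\<close>. Moving \<open>N\<^sub>\<infinity>\<close> one block down the diagonal applies \<open>\<sigma>\<close> to all entries,
  and a field homomorphism preserves linear independence, so every translate of a
  corner has the same rank. Hence \<open>N\<^sub>k\<close> sits inside \<open>N\<^sub>k\<^sub>+\<^sub>1\<close> both as the top-left
  corner (padded by zeros) and, up to rank, as the bottom-right corner. The rank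
  inequality \<open>rank(R,C\<^sub>0) + rank(R\<^sub>0,C) \<le> rank(R\<^sub>0,C\<^sub>0) + rank(R,C)\<close> for nested row and column
  sets then makes the increments \<open>r (k+1) - r k\<close> nondecreasing, and they are bounded by
  \<open>min p q\<close>; so they become constant, equal to some \<open>d\<close>, from an index \<open>J\<close> on.
  The band width gives \<open>r (a+b) \<le> r a + r (b+t-1)\<close>; iterating this against the
  linear tail yields \<open>d s \<le> r (s+t-1)\<close>, while every increment before \<open>J\<close> is at most
  \<open>d - 1\<close>. Comparing both bounds at \<open>J\<close> gives \<open>J \<le> d (t-1) \<le> (t-1) min p q\<close>.
\<close>

section \<open>Gaussian elimination and field homomorphisms\<close>

lemma field_endo_funpow: "field_endo \<sigma> \<Longrightarrow> field_endo (\<sigma> ^^ n)"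
  by (induction n) (auto simp: field_endo_def)

lemma field_hom_if_field_endo:
  assumes "field_endo \<sigma>"
  shows "field_hom \<sigma>"
proof -
  have "\<sigma> 0 = 0"
    using assms unfolding field_endo_def by (metis add_cancel_right_right add_0)
  then show ?thesis by unfold_locales (use assms in \<open>auto simp: field_endo_def\<close>)
qed

definition lin_indep_family :: "nat \<Rightarrow> (nat \<Rightarrow> nat \<Rightarrow> 'a::field) \<Rightarrow> bool" where
  "lin_indep_family r v \<longleftrightarrow> (\<forall>a. (\<forall>i. (\<Sum>j<r. a j * v j i) = 0) \<longrightarrow> (\<forall>j<r. a j = 0))"

lemma lin_indep_family_last_nonzero:
  assumes "lin_indep_family (Suc r) v"
  shows "\<exists>i. v r i \<noteq> 0"
proof (rule ccontr)
  assume "\<nexists>i. v r i \<noteq> 0"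
  then have "\<forall>i. (\<Sum>j<Suc r. (if j = r then 1 else 0) * v j i) = 0" by simp
  then show False
    using assms[unfolded lin_indep_family_def, rule_format, of "\<lambda>j. if j = r then 1 else 0" r]
    by simp
qed

text \<open>One step of Gaussian elimination with pivot \<open>v r i\<^sub>0\<close>.\<close>

lemma lin_indep_family_eliminate:
  fixes v :: "nat \<Rightarrow> nat \<Rightarrow> 'a::field"
  assumes pivot: "v r i0 \<noteq> 0"
  shows "lin_indep_family (Suc r) v \<longleftrightarrow>
         lin_indep_family r (\<lambda>j i. v r i0 * v j i - v j i0 * v r i)"
proof
  assume indep: "lin_indep_family (Suc r) v"
  show "lin_indep_family r (\<lambda>j i. v r i0 * v j i - v j i0 * v r i)"
    unfolding lin_indep_family_def
  proof (intro allI impI)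
    fix a j
    assume rel: "\<forall>i. (\<Sum>j<r. a j * (v r i0 * v j i - v j i0 * v r i)) = 0" and j: "j < r"
    define a' where "a' j = (if j < r then a j * v r i0 else - (\<Sum>j<r. a j * v j i0))" for j
    have eq: "(\<Sum>j<Suc r. a' j * v j i) = (\<Sum>j<r. a j * (v r i0 * v j i - v j i0 * v r i))" for i
      by (simp add: a'_def)
        (simp add: sum_distrib_left sum_distrib_right sum_subtractf algebra_simps)
    have "\<forall>i. (\<Sum>j<Suc r. a' j * v j i) = 0" unfolding eq using rel by blast
    then have "a' j = 0"
      using indep[unfolded lin_indep_family_def, rule_format, of a' j] less_SucI[OF j] by blast
    then show "a j = 0" using j pivot by (simp add: a'_def)
  qed
next
  assume indep: "lin_indep_family r (\<lambda>j i. v r i0 * v j i - v j i0 * v r i)"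
  show "lin_indep_family (Suc r) v"
    unfolding lin_indep_family_def
  proof (intro allI impI)
    fix b j assume rel: "\<forall>i. (\<Sum>j<Suc r. b j * v j i) = 0" and j: "j < Suc r"
    have "(\<Sum>j<r. b j * (v r i0 * v j i - v j i0 * v r i)) =
          v r i0 * (\<Sum>j<Suc r. b j * v j i) - v r i * (\<Sum>j<Suc r. b j * v j i0)" for i
      by (simp add: sum_distrib_left sum_subtractf algebra_simps)
    then have "\<forall>i. (\<Sum>j<r. b j * (v r i0 * v j i - v j i0 * v r i)) = 0"
      unfolding rel[rule_format] by simp
    then have below: "\<forall>j<r. b j = 0" using indep unfolding lin_indep_family_def by blast
    then have "b r * v r i0 = 0" using rel[rule_format, of i0] by simp
    then show "b j = 0" using below j pivot less_Suc_eq by auto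
  qed
qed

lemma (in field_hom) lin_indep_family_hom_iff:
  "lin_indep_family r (\<lambda>j i. hom (v j i)) \<longleftrightarrow> lin_indep_family r v"
proof (induction r arbitrary: v)
  case 0
  show ?case by (simp add: lin_indep_family_def)
next
  case (Suc r)
  show ?case
  proof (cases "\<exists>i. v r i \<noteq> 0")
    case True
    then obtain i0 where pivot: "v r i0 \<noteq> 0" by blast
    have "lin_indep_family (Suc r) (\<lambda>j i. hom (v j i)) \<longleftrightarrow>
          lin_indep_family r (\<lambda>j i. hom (v r i0) * hom (v j i) - hom (v j i0) * hom (v r i))"
      using pivot by (intro lin_indep_family_eliminate) simp
    also have "\<dots> \<longleftrightarrow> lin_indep_family r (\<lambda>j i. hom (v r i0 * v j i - v j i0 * v r i))"
      by (simp add: hom_distribs)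
    also have "\<dots> \<longleftrightarrow> lin_indep_family r (\<lambda>j i. v r i0 * v j i - v j i0 * v r i)"
      by (rule Suc.IH)
    also have "\<dots> \<longleftrightarrow> lin_indep_family (Suc r) v"
      using lin_indep_family_eliminate[of v r i0] pivot by simp
    finally show ?thesis .
  next
    case False
    then show ?thesis
      using lin_indep_family_last_nonzero[of r v]
        lin_indep_family_last_nonzero[of r "\<lambda>j i. hom (v j i)"] by auto
  qed
qed

section \<open>Finite-dimensional subspaces of the sequence space\<close>

abbreviation (input) seq_scale :: "'a::field \<Rightarrow> (nat \<Rightarrow> 'a) \<Rightarrow> nat \<Rightarrow> 'a" where
  "seq_scale c f \<equiv> (\<lambda>i. c * f i)"

interpretation seq: vector_space "seq_scale :: 'a::field \<Rightarrow> _"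
  by unfold_locales (auto simp: algebra_simps fun_eq_iff)

interpretation seq_pair: vector_space_pair "seq_scale :: 'a::field \<Rightarrow> _" "seq_scale :: 'a \<Rightarrow> _"
  by unfold_locales

abbreviation seq_linear :: "((nat \<Rightarrow> 'a::field) \<Rightarrow> nat \<Rightarrow> 'a) \<Rightarrow> bool" where
  "seq_linear \<equiv> Vector_Spaces.linear seq_scale seq_scale"

lemma seq_linearI:
  fixes P :: "(nat \<Rightarrow> 'a::field) \<Rightarrow> nat \<Rightarrow> 'a"
  assumes "\<And>x y. P (x + y) = P x + P y" "\<And>c x. P (seq_scale c x) = seq_scale c (P x)"
  shows "seq_linear P"
  unfolding Vector_Spaces.linear_iff using assms seq.vector_space_axioms by blast

lemma sum_fun_apply: "(\<Sum>x\<in>S. f x) i = (\<Sum>x\<in>S. f x i)"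
  by (induction S rule: infinite_finite_induct) auto

lemma seq_independent_iff:
  fixes B :: "(nat \<Rightarrow> 'a::field) set"
  assumes "finite B"
  shows "seq.independent B \<longleftrightarrow> (\<forall>u. (\<forall>i. (\<Sum>x\<in>B. u x * x i) = 0) \<longrightarrow> (\<forall>x\<in>B. u x = 0))"
proof -
  have "(\<Sum>x\<in>B. seq_scale (u x) x) = 0 \<longleftrightarrow> (\<forall>i. (\<Sum>x\<in>B. u x * x i) = 0)" for u
    by (simp add: fun_eq_iff sum_fun_apply)
  then show ?thesis using seq.dependent_finite[OF assms] by blast
qed

lemma seq_basis:
  fixes S :: "(nat \<Rightarrow> 'a::field) set"
  assumes "finite S"
  obtains B where "B \<subseteq> S" "seq.independent B" "S \<subseteq> seq.span B" "card B = seq.dim S" "finite B"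
proof -
  obtain B where B: "B \<subseteq> S" "seq.independent B" "S \<subseteq> seq.span B"
    using seq.maximal_independent_subset by blast
  then show ?thesis
    using that seq.basis_card_eq_dim[OF B(1,3,2)] finite_subset[OF B(1) assms] by blast
qed

lemma seq_dim_le_card: "finite (S :: (nat \<Rightarrow> 'a::field) set) \<Longrightarrow> seq.dim S \<le> card S"
  using seq.dim_le_card[of S S] seq.span_superset by blast

lemma seq_dim_mono:
  fixes S T :: "(nat \<Rightarrow> 'a::field) set"
  assumes "finite T" "S \<subseteq> seq.span T"
  shows "seq.dim S \<le> seq.dim T"
proof -
  obtain B where B: "B \<subseteq> T" "seq.independent B" "T \<subseteq> seq.span B" "card B = seq.dim T" "finite B"
    using seq_basis[OF assms(1)] by blast
  have "seq.span T \<subseteq> seq.span B" by (rule seq.span_minimal[OF B(3) seq.subspace_span])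
  then have "S \<subseteq> seq.span B" using assms(2) by (rule subset_trans[rotated])
  then show ?thesis using seq.dim_le_card[OF _ B(5)] B(4) by simp
qed

lemma seq_dim_Un_le:
  fixes S T :: "(nat \<Rightarrow> 'a::field) set"
  assumes "finite S" "finite T"
  shows "seq.dim (S \<union> T) \<le> seq.dim S + seq.dim T"
proof -
  obtain B where B: "S \<subseteq> seq.span B" "card B = seq.dim S" "finite B"
    using seq_basis[OF assms(1)] by metis
  obtain C where C: "T \<subseteq> seq.span C" "card C = seq.dim T" "finite C"
    using seq_basis[OF assms(2)] by metis
  have "S \<union> T \<subseteq> seq.span (B \<union> C)"
    using B(1) C(1) seq.span_mono[of B "B \<union> C"] seq.span_mono[of C "B \<union> C"] by blast
  then have "seq.dim (S \<union> T) \<le> card (B \<union> C)" using seq.dim_le_card B(3) C(3) by blast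
  also have "\<dots> \<le> card B + card C" by (rule card_Un_le)
  finally show ?thesis using B(2) C(2) by simp
qed

lemma seq_dim_image_le:
  fixes S :: "(nat \<Rightarrow> 'a::field) set"
  assumes "seq_linear P" "finite S"
  shows "seq.dim (P ` S) \<le> seq.dim S"
proof -
  obtain B where B: "S \<subseteq> seq.span B" "card B = seq.dim S" "finite B"
    using seq_basis[OF assms(2)] by metis
  have "P ` S \<subseteq> seq.span (P ` B)"
    using seq_pair.linear_span_image[OF assms(1), of B] B(1) by blast
  then have "seq.dim (P ` S) \<le> card (P ` B)" using seq.dim_le_card B(3) by blast
  also have "\<dots> \<le> card B" using B(3) card_image_le by blast
  finally show ?thesis using B(2) by simp
qed

lemma seq_dim_image_eq:
  fixes S :: "(nat \<Rightarrow> 'a::field) set"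
  assumes lin: "seq_linear P" and "finite S" and inj: "inj_on P (seq.span S)"
  shows "seq.dim (P ` S) = seq.dim S"
proof -
  obtain B where B: "B \<subseteq> S" "seq.independent B" "S \<subseteq> seq.span B" "card B = seq.dim S"
    using seq_basis[OF assms(2)] by metis
  have inj_B: "inj_on P B"
    using inj_on_subset[OF inj] B(1) seq.span_superset by blast
  have "seq.independent (P ` B)"
    using seq_pair.linear_independent_injective_image[OF lin B(2)]
      inj_on_subset[OF inj seq.span_mono[OF B(1)]] by blast
  moreover have "P ` S \<subseteq> seq.span (P ` B)"
    using seq_pair.linear_span_image[OF lin, of B] B(3) by blast
  ultimately have "card (P ` B) = seq.dim (P ` S)"
    using seq.basis_card_eq_dim[of "P ` B" "P ` S"] B(1) by blast
  then show ?thesis using B(4) card_image[OF inj_B] by simp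
qed

text \<open>Extend a basis of \<open>S\<close> to one of \<open>S\<^sub>0\<close>: the extra vectors account for all of the
  increase from \<open>P ` S\<close> to \<open>P ` S\<^sub>0\<close>.\<close>

lemma seq_dim_image_increment_le:
  fixes S S0 :: "(nat \<Rightarrow> 'a::field) set"
  assumes lin: "seq_linear P" and "finite S0" "S \<subseteq> S0"
  shows "seq.dim (P ` S0) + seq.dim S \<le> seq.dim S0 + seq.dim (P ` S)"
proof -
  have fin_S: "finite S" using assms finite_subset by blast
  obtain B where B: "B \<subseteq> S" "seq.independent B" "card B = seq.dim S" "finite B"
    using seq_basis[OF fin_S] by metis
  obtain B0 where B0: "B \<subseteq> B0" "B0 \<subseteq> S0" "seq.independent B0" "S0 \<subseteq> seq.span B0"
    using seq.maximal_independent_subset_extend[of B S0] B(1,2) assms(3) by blast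
  have fin_B0: "finite B0" using B0(2) assms(2) finite_subset by blast
  have card_B0: "card B0 = seq.dim S0" using seq.basis_card_eq_dim[OF B0(2,4,3)] .
  have split: "P ` B0 = P ` B \<union> P ` (B0 - B)" using B0(1) by auto
  have "P ` S0 \<subseteq> seq.span (P ` B \<union> P ` (B0 - B))"
    using image_mono[OF B0(4), of P] unfolding seq_pair.linear_span_image[OF lin, symmetric] split .
  then have "seq.dim (P ` S0) \<le> seq.dim (P ` B \<union> P ` (B0 - B))"
    by (rule seq_dim_mono[rotated]) (use fin_B0 B(4) in simp)
  also have "\<dots> \<le> seq.dim (P ` B) + seq.dim (P ` (B0 - B))"
    by (rule seq_dim_Un_le) (use fin_B0 B(4) in simp_all)
  also have "seq.dim (P ` B) \<le> seq.dim (P ` S)"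
    using image_mono[OF B(1), of P] seq.span_superset[of "P ` S"] fin_S
    by (intro seq_dim_mono) auto
  also have "seq.dim (P ` (B0 - B)) \<le> card B0 - card B"
    using seq_dim_le_card[of "P ` (B0 - B)"] card_image_le[of "B0 - B" P] fin_B0
      card_Diff_subset[OF B(4) B0(1)] by simp
  finally show ?thesis using card_B0 B(3) card_mono[OF fin_B0 B0(1)] by linarith
qed

lemma seq_dependent_image_iff:
  fixes \<phi> :: "'b \<Rightarrow> nat \<Rightarrow> 'a::field"
  assumes inj: "inj_on \<phi> T" and fin: "finite T"
  shows "seq.dependent (\<phi> ` T) \<longleftrightarrow> (\<exists>a. (\<forall>i. (\<Sum>x\<in>T. a x * \<phi> x i) = 0) \<and> (\<exists>v\<in>T. a v \<noteq> 0))"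
proof -
  have reindex: "(\<Sum>y\<in>\<phi> ` T. u y * y i) = (\<Sum>x\<in>T. u (\<phi> x) * \<phi> x i)" for u i
    by (simp add: sum.reindex[OF inj])
  note indep_iff = seq_independent_iff[OF finite_imageI[OF fin]]
  show ?thesis
  proof
    assume "seq.dependent (\<phi> ` T)"
    then obtain u y where "\<forall>i. (\<Sum>y\<in>\<phi> ` T. u y * y i) = 0" "y \<in> \<phi> ` T" "u y \<noteq> 0"
      using indep_iff by blast
    then show "\<exists>a. (\<forall>i. (\<Sum>x\<in>T. a x * \<phi> x i) = 0) \<and> (\<exists>v\<in>T. a v \<noteq> 0)"
      by (intro exI[of _ "u \<circ> \<phi>"]) (auto simp: reindex)
  next
    assume "\<exists>a. (\<forall>i. (\<Sum>x\<in>T. a x * \<phi> x i) = 0) \<and> (\<exists>v\<in>T. a v \<noteq> 0)"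
    then obtain a v where rel: "\<forall>i. (\<Sum>x\<in>T. a x * \<phi> x i) = 0" and v: "v \<in> T" "a v \<noteq> 0"
      by blast
    let ?u = "\<lambda>y. a (inv_into T \<phi> y)"
    have "\<forall>i. (\<Sum>y\<in>\<phi> ` T. ?u y * y i) = 0"
      using rel by (simp add: reindex inv_into_f_f[OF inj])
    moreover have "?u (\<phi> v) \<noteq> 0" using v by (simp add: inv_into_f_f[OF inj])
    ultimately show "seq.dependent (\<phi> ` T)"
      using indep_iff[THEN iffD1, rule_format, where u = ?u and x = "\<phi> v"] v(1) by blast
  qed
qed

lemma seq_independent_family_iff:
  fixes e :: "nat \<Rightarrow> nat \<Rightarrow> 'a::field"
  assumes "inj_on e {..<n}"
  shows "seq.independent (e ` {..<n}) \<longleftrightarrow> lin_indep_family n e"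
  unfolding seq_dependent_image_iff[OF assms finite_lessThan] lin_indep_family_def by auto

section \<open>Field homomorphisms preserve dimension\<close>

lemma (in field_hom) inj_comp_hom: "inj ((\<circ>) hom)"
  by (auto intro!: injI simp: fun_eq_iff)

lemma (in field_hom) seq_independent_hom_iff:
  assumes "finite B"
  shows "seq.independent ((\<circ>) hom ` B) \<longleftrightarrow> seq.independent B"
proof -
  obtain e where e: "bij_betw e {..<card B} B"
    using ex_bij_betw_nat_finite[OF assms] by (auto simp: atLeast0LessThan)
  have B: "B = e ` {..<card B}" and inj_e: "inj_on e {..<card B}"
    using e by (auto simp: bij_betw_def)
  have hom_B: "(\<circ>) hom ` B = (\<lambda>j i. hom (e j i)) ` {..<card B}"
    by (subst B) (auto simp: image_image comp_def)
  have inj_hom_e: "inj_on (\<lambda>j i. hom (e j i)) {..<card B}"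
    using comp_inj_on[OF inj_e inj_on_subset[OF inj_comp_hom]] by (simp add: comp_def)
  show ?thesis
    unfolding hom_B seq_independent_family_iff[OF inj_hom_e] lin_indep_family_hom_iff
    by (subst B) (rule seq_independent_family_iff[OF inj_e, symmetric])
qed

lemma (in field_hom) seq_dim_hom:
  assumes "finite S"
  shows "seq.dim ((\<circ>) hom ` S) = seq.dim S"
proof -
  obtain B where B: "B \<subseteq> S" "seq.independent B" "S \<subseteq> seq.span B" "card B = seq.dim S" "finite B"
    using seq_basis[OF assms] by blast
  have indep: "seq.independent ((\<circ>) hom ` B)" using seq_independent_hom_iff[OF B(5)] B(2) by simp
  have "hom \<circ> x \<in> seq.span ((\<circ>) hom ` B)" if "x \<in> S" for x
  proof (cases "x \<in> B")
    case True
    then show ?thesis by (simp add: seq.span_base)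
  next
    case False
    have "x \<in> seq.span B" using that B(3) by blast
    then have "seq.dependent (insert x B)" using False seq.independent_insert[of x B] by simp
    then have "seq.dependent (insert (hom \<circ> x) ((\<circ>) hom ` B))"
      using seq_independent_hom_iff[of "insert x B"] B(5) by simp
    moreover have "hom \<circ> x \<notin> (\<circ>) hom ` B"
      using False inj_image_mem_iff[OF inj_comp_hom, of x B] by blast
    ultimately show ?thesis using indep seq.independent_insert[of "hom \<circ> x" "(\<circ>) hom ` B"] by simp
  qed
  then have "card ((\<circ>) hom ` B) = seq.dim ((\<circ>) hom ` S)"
    using seq.basis_card_eq_dim[OF image_mono[OF B(1)] _ indep] by blast
  then show ?thesis
    using B(4) card_image[OF inj_on_subset[OF inj_comp_hom subset_UNIV], of B] by linarith
qed

section \<open>Ranks of submatrices of an infinite matrix\<close>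

definition restrict_seq :: "nat set \<Rightarrow> (nat \<Rightarrow> 'a::zero) \<Rightarrow> nat \<Rightarrow> 'a" where
  "restrict_seq R f = (\<lambda>i. if i \<in> R then f i else 0)"

text \<open>The rank of the \<open>R \<times> C\<close> submatrix of \<open>g\<close>, computed as the dimension of the span of its
  columns padded by zeros outside \<open>R\<close>.\<close>

definition subrank :: "(nat \<Rightarrow> nat \<Rightarrow> 'a::field) \<Rightarrow> nat set \<Rightarrow> nat set \<Rightarrow> nat" where
  "subrank g R C = seq.dim ((\<lambda>j. restrict_seq R (\<lambda>i. g i j)) ` C)"

lemma restrict_seq_linear: "seq_linear (restrict_seq R :: (nat \<Rightarrow> 'a::field) \<Rightarrow> _)"
  by (rule seq_linearI) (auto simp: restrict_seq_def fun_eq_iff)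

lemma restrict_seq_restrict_seq: "R \<subseteq> R' \<Longrightarrow> restrict_seq R (restrict_seq R' f) = restrict_seq R f"
  unfolding restrict_seq_def fun_eq_iff by auto

lemma subrank_via_restrict_rows:
  assumes "R \<subseteq> R'"
  shows "subrank g R C = seq.dim (restrict_seq R ` (\<lambda>j. restrict_seq R' (\<lambda>i. g i j)) ` C)"
  unfolding subrank_def image_image restrict_seq_restrict_seq[OF assms] ..

lemma subrank_mono_cols:
  assumes "C \<subseteq> C'" "finite C'"
  shows "subrank g R C \<le> subrank g R C'"
  unfolding subrank_def
  using assms by (intro seq_dim_mono) (auto intro: seq.span_base)

lemma subrank_mono_rows:
  assumes "R \<subseteq> R'" "finite C"
  shows "subrank g R C \<le> subrank g R' C"
  unfolding subrank_via_restrict_rows[OF assms(1)] unfolding subrank_def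
  by (rule seq_dim_image_le[OF restrict_seq_linear]) (use assms in simp)

lemma subrank_exchange:
  assumes "finite C0" "C \<subseteq> C0" "R \<subseteq> R0"
  shows "subrank g R C0 + subrank g R0 C \<le> subrank g R0 C0 + subrank g R C"
  unfolding subrank_via_restrict_rows[OF assms(3)] unfolding subrank_def
  by (rule seq_dim_image_increment_le[OF restrict_seq_linear]) (use assms in auto)

lemma subrank_Un_rows_le:
  assumes "finite C"
  shows "subrank g (R1 \<union> R2) C \<le> subrank g R1 C + subrank g R2 C"
proof -
  let ?col = "\<lambda>R j. restrict_seq R (\<lambda>i. g i j)"
  have "?col (R1 \<union> R2) j = ?col R1 j + ?col (R2 - R1) j" for j
    unfolding restrict_seq_def fun_eq_iff by auto
  moreover have "?col R j \<in> seq.span (?col R1 ` C \<union> ?col (R2 - R1) ` C)"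
    if "j \<in> C" "R \<in> {R1, R2 - R1}" for j R
    using that by (auto intro: seq.span_base)
  ultimately have "?col (R1 \<union> R2) ` C \<subseteq> seq.span (?col R1 ` C \<union> ?col (R2 - R1) ` C)"
    by (auto intro: seq.span_add)
  then have "subrank g (R1 \<union> R2) C \<le> seq.dim (?col R1 ` C \<union> ?col (R2 - R1) ` C)"
    unfolding subrank_def by (rule seq_dim_mono[rotated]) (use assms in simp)
  also have "\<dots> \<le> subrank g R1 C + subrank g (R2 - R1) C"
    unfolding subrank_def by (rule seq_dim_Un_le) (use assms in simp_all)
  also have "subrank g (R2 - R1) C \<le> subrank g R2 C"
    by (rule subrank_mono_rows) (use assms in auto)
  finally show ?thesis by simp
qed

lemma subrank_le_card_rows:
  assumes "finite R"
  shows "subrank g R C \<le> card R"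
proof -
  define unit :: "nat \<Rightarrow> nat \<Rightarrow> 'a" where "unit i = (\<lambda>k. if k = i then 1 else 0)" for i
  have "restrict_seq R (\<lambda>i. g i j) = (\<Sum>i\<in>R. seq_scale (g i j) (unit i))" for j
    unfolding fun_eq_iff sum_fun_apply restrict_seq_def unit_def using assms
    by (simp add: if_distrib[of "\<lambda>x. _ * x"] cong: if_cong)
  also have "(\<Sum>i\<in>R. seq_scale (g i j) (unit i)) \<in> seq.span (unit ` R)" for j
    by (intro seq.span_sum seq.span_scale seq.span_base) simp
  finally have "(\<lambda>j. restrict_seq R (\<lambda>i. g i j)) ` C \<subseteq> seq.span (unit ` R)"
    by blast
  then have "subrank g R C \<le> card (unit ` R)"
    unfolding subrank_def by (intro seq.dim_le_card) (use assms in auto)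
  also have "\<dots> \<le> card R" using card_image_le assms by blast
  finally show ?thesis .
qed

lemma subrank_le_card_cols:
  assumes "finite C"
  shows "subrank g R C \<le> card C"
  unfolding subrank_def
  using seq_dim_le_card[of "(\<lambda>j. restrict_seq R (\<lambda>i. g i j)) ` C"] card_image_le[OF assms] assms
  by (meson finite_imageI le_trans)

lemma subrank_Un_cols_le:
  assumes "finite C1" "finite C2"
  shows "subrank g R (C1 \<union> C2) \<le> subrank g R C1 + card C2"
proof -
  have "subrank g R (C1 \<union> C2) \<le> subrank g R C1 + subrank g R C2"
    unfolding subrank_def image_Un by (rule seq_dim_Un_le) (use assms in simp_all)
  then show ?thesis using subrank_le_card_cols[OF assms(2), of g R] by simp
qed

lemma subrank_zero_cols:
  assumes "\<forall>j\<in>C2. \<forall>i\<in>R. g i j = 0" "finite C" "finite C2"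
  shows "subrank g R (C \<union> C2) = subrank g R C"
proof (rule antisym)
  have "restrict_seq R (\<lambda>i. g i j) = 0" if "j \<in> C2" for j
    using assms(1) that unfolding restrict_seq_def fun_eq_iff by auto
  then have "(\<lambda>j. restrict_seq R (\<lambda>i. g i j)) ` (C \<union> C2) \<subseteq>
             seq.span ((\<lambda>j. restrict_seq R (\<lambda>i. g i j)) ` C)"
    by (auto intro: seq.span_base seq.span_zero)
  then show "subrank g R (C \<union> C2) \<le> subrank g R C"
    unfolding subrank_def by (rule seq_dim_mono[rotated]) (use assms in simp)
qed (rule subrank_mono_cols, use assms in auto)

lemma subrank_zero_rows:
  assumes "\<forall>i\<in>R2. \<forall>j\<in>C. g i j = 0"
  shows "subrank g (R \<union> R2) C = subrank g R C"
proof -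
  have "(\<lambda>j. restrict_seq (R \<union> R2) (\<lambda>i. g i j)) ` C = (\<lambda>j. restrict_seq R (\<lambda>i. g i j)) ` C"
    using assms by (intro image_cong) (auto simp: restrict_seq_def fun_eq_iff)
  then show ?thesis unfolding subrank_def by simp
qed

lemma subrank_cong:
  assumes "\<forall>i\<in>R. \<forall>j\<in>C. g i j = g' i j"
  shows "subrank g R C = subrank g' R C"
proof -
  have "(\<lambda>j. restrict_seq R (\<lambda>i. g i j)) ` C = (\<lambda>j. restrict_seq R (\<lambda>i. g' i j)) ` C"
    using assms by (intro image_cong) (auto simp: restrict_seq_def fun_eq_iff)
  then show ?thesis unfolding subrank_def by simp
qed

lemma (in field_hom) subrank_hom:
  assumes "finite C"
  shows "subrank (\<lambda>i j. hom (g i j)) R C = subrank g R C"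
proof -
  have "(\<lambda>j. restrict_seq R (\<lambda>i. hom (g i j))) ` C = (\<circ>) hom ` (\<lambda>j. restrict_seq R (\<lambda>i. g i j)) ` C"
    by (auto simp: restrict_seq_def fun_eq_iff image_image intro!: image_cong)
  then show ?thesis unfolding subrank_def using seq_dim_hom assms by simp
qed

lemma subrank_shift:
  fixes g :: "nat \<Rightarrow> nat \<Rightarrow> 'a::field"
  assumes "finite C"
  shows "subrank (\<lambda>i j. g (i + a) (j + b)) R C = subrank g ((\<lambda>i. i + a) ` R) ((\<lambda>j. j + b) ` C)"
proof -
  define R' where "R' = (\<lambda>i. i + a) ` R"
  define P :: "(nat \<Rightarrow> 'a) \<Rightarrow> nat \<Rightarrow> 'a" where "P f = restrict_seq R (\<lambda>i. f (i + a))" for f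
  have lin: "seq_linear P"
    by (rule seq_linearI) (auto simp: P_def restrict_seq_def fun_eq_iff)
  have cols: "(\<lambda>j. restrict_seq R (\<lambda>i. g (i + a) (j + b))) ` C =
              P ` (\<lambda>j. restrict_seq R' (\<lambda>i. g i j)) ` (\<lambda>j. j + b) ` C"
    unfolding image_image by (rule image_cong) (auto simp: restrict_seq_def P_def R'_def fun_eq_iff)
  define Z where "Z = {f :: nat \<Rightarrow> 'a. \<forall>i. i \<notin> R' \<longrightarrow> f i = 0}"
  have "seq.subspace Z" unfolding seq.subspace_def Z_def by auto
  moreover have "(\<lambda>j. restrict_seq R' (\<lambda>i. g i j)) ` (\<lambda>j. j + b) ` C \<subseteq> Z"
    unfolding Z_def restrict_seq_def by auto
  ultimately have span_Z: "seq.span ((\<lambda>j. restrict_seq R' (\<lambda>i. g i j)) ` (\<lambda>j. j + b) ` C) \<subseteq> Z"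
    using seq.span_minimal by blast
  have "inj_on P Z"
  proof (rule inj_onI, rule ext)
    fix f h i assume f: "f \<in> Z" and h: "h \<in> Z" and eq: "P f = P h"
    show "f i = h i"
    proof (cases "i \<in> R'")
      case True
      then obtain k where "k \<in> R" "i = k + a" unfolding R'_def by blast
      then show ?thesis using fun_cong[OF eq, of k] unfolding P_def restrict_seq_def by simp
    next
      case False
      then show ?thesis using f h unfolding Z_def by simp
    qed
  qed
  then show ?thesis unfolding subrank_def cols R'_def[symmetric]
    by (intro seq_dim_image_eq[OF lin]) (use assms inj_on_subset span_Z in simp_all)
qed

section \<open>Matrix rank as the rank of a submatrix\<close>

definition vec_to_seq :: "nat \<Rightarrow> 'a::zero vec \<Rightarrow> nat \<Rightarrow> 'a" where
  "vec_to_seq n v = (\<lambda>i. if i < n then v $ i else 0)"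

lemma inj_on_vec_to_seq: "inj_on (vec_to_seq n) (carrier_vec n)"
proof (rule inj_onI, rule eq_vecI)
  fix x y assume x: "x \<in> carrier_vec n" and y: "y \<in> carrier_vec n"
    and eq: "vec_to_seq n x = vec_to_seq n y"
  show "dim_vec x = dim_vec y" using x y by simp
  fix i assume "i < dim_vec y"
  then show "x $ i = y $ i" using y fun_cong[OF eq, of i] unfolding vec_to_seq_def by simp
qed

lemma (in vec_space) lin_dep_iff_seq_dependent:
  assumes T: "T \<subseteq> carrier_vec n" and fin: "finite T"
  shows "lin_dep T \<longleftrightarrow> seq.dependent (vec_to_seq n ` T)"
proof -
  have inj: "inj_on (vec_to_seq n) T" using inj_on_subset[OF inj_on_vec_to_seq T] .
  have lincomb_eq: "lincomb a A = 0\<^sub>v n \<longleftrightarrow> (\<forall>i. (\<Sum>x\<in>A. a x * vec_to_seq n x i) = 0)"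
    if "A \<subseteq> T" "finite A" for a A
  proof -
    have A: "A \<subseteq> carrier_vec n" using that T by blast
    have "lincomb a A = 0\<^sub>v n \<longleftrightarrow> (\<forall>i<n. lincomb a A $ i = 0)"
      using lincomb_dim[OF that(2) A] by (auto simp: vec_eq_iff)
    also have "\<dots> \<longleftrightarrow> (\<forall>i. (\<Sum>x\<in>A. a x * vec_to_seq n x i) = 0)"
    proof -
      have "(\<Sum>x\<in>A. a x * vec_to_seq n x i) = (if i < n then lincomb a A $ i else 0)" for i
        using lincomb_index[OF _ A] by (cases "i < n") (simp_all add: vec_to_seq_def)
      then show ?thesis by auto
    qed
    finally show ?thesis .
  qed
  have "lin_dep T \<longleftrightarrow> (\<exists>a. (\<forall>i. (\<Sum>x\<in>T. a x * vec_to_seq n x i) = 0) \<and> (\<exists>v\<in>T. a v \<noteq> 0))"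
  proof
    assume "lin_dep T"
    then obtain A a v where A: "finite A" "A \<subseteq> T" "lincomb a A = 0\<^sub>v n" "v \<in> A" "a v \<noteq> 0"
      unfolding lin_dep_def by auto
    define a' where "a' x = (if x \<in> A then a x else 0)" for x
    have "(\<Sum>x\<in>T. a' x * vec_to_seq n x i) = (\<Sum>x\<in>A. a x * vec_to_seq n x i)" for i
      unfolding a'_def using A(2) fin
      by (simp add: if_distrib[of "\<lambda>c. c * _"] sum.If_cases Int_absorb1)
    then show "\<exists>a. (\<forall>i. (\<Sum>x\<in>T. a x * vec_to_seq n x i) = 0) \<and> (\<exists>v\<in>T. a v \<noteq> 0)"
      using A lincomb_eq[OF A(2,1)] by (intro exI[of _ a']) (auto simp: a'_def)
  next
    assume "\<exists>a. (\<forall>i. (\<Sum>x\<in>T. a x * vec_to_seq n x i) = 0) \<and> (\<exists>v\<in>T. a v \<noteq> 0)"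
    then show "lin_dep T"
      using lincomb_eq[OF subset_refl fin] fin unfolding lin_dep_def by blast
  qed
  also have "\<dots> \<longleftrightarrow> seq.dependent (vec_to_seq n ` T)"
    by (rule seq_dependent_image_iff[OF inj fin, symmetric])
  finally show ?thesis .
qed

lemma (in vec_space) rank_eq_seq_dim:
  assumes A: "A \<in> carrier_mat n m"
  shows "rank A = seq.dim (vec_to_seq n ` set (cols A))"
proof -
  let ?S = "set (cols A)"
  have S: "?S \<subseteq> carrier_vec n" using A cols_dim by blast
  have inj: "inj_on (vec_to_seq n) ?S" using inj_on_subset[OF inj_on_vec_to_seq S] .
  obtain B where B: "B \<subseteq> vec_to_seq n ` ?S" "seq.independent B" "vec_to_seq n ` ?S \<subseteq> seq.span B"
    using seq.maximal_independent_subset by blast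
  define U where "U = {x \<in> ?S. vec_to_seq n x \<in> B}"
  have U: "U \<subseteq> ?S" "finite U" and U_B: "vec_to_seq n ` U = B"
    using B(1) unfolding U_def by auto
  have indep_U: "lin_indpt U" using lin_dep_iff_seq_dependent[of U] U S B(2) U_B by auto
  have "maximal U (\<lambda>T. T \<subseteq> ?S \<and> lin_indpt T)"
    unfolding maximal_def
  proof (intro conjI allI impI)
    fix T assume T: "U \<subseteq> T \<and> T \<subseteq> ?S \<and> lin_indpt T"
    have "seq.independent (vec_to_seq n ` T)"
      using T S lin_dep_iff_seq_dependent[of T] finite_subset[of T ?S] by auto
    show "T = U"
    proof (rule ccontr)
      assume "T \<noteq> U"
      then obtain x where x: "x \<in> T" "x \<notin> U" using T by blast
      then have "vec_to_seq n x \<notin> B" "vec_to_seq n x \<in> seq.span B"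
        using T B(3) unfolding U_def by auto
      then have "seq.dependent (insert (vec_to_seq n x) B)"
        using seq.independent_insert[of "vec_to_seq n x" B] by simp
      moreover have "insert (vec_to_seq n x) B \<subseteq> vec_to_seq n ` T" using x T U_B by blast
      ultimately show False using \<open>seq.independent (vec_to_seq n ` T)\<close> seq.dependent_mono by blast
    qed
  qed (use U indep_U in auto)
  then have "rank A = card U" using rank_card_indpt[OF A] by blast
  also have "\<dots> = card B" using card_image[OF inj_on_subset[OF inj U(1)]] U_B by simp
  also have "\<dots> = seq.dim (vec_to_seq n ` ?S)" using seq.basis_card_eq_dim[OF B(1,3,2)] .
  finally show ?thesis .
qed

lemma mat_rank_eq_subrank:
  fixes A :: "'a::field mat"
  assumes A: "A \<in> carrier_mat n m"
  shows "mat_rank A = subrank (\<lambda>i j. A $$ (i, j)) {..<n} {..<m}"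
proof -
  have "set (cols A) = col A ` {..<m}" using A by (auto simp: cols_def)
  then have "vec_to_seq n ` set (cols A) = (\<lambda>j. restrict_seq {..<n} (\<lambda>i. A $$ (i, j))) ` {..<m}"
    using A
    by (auto simp: image_image vec_to_seq_def restrict_seq_def fun_eq_iff intro!: image_cong)
  then show ?thesis
    using vec_space.rank_eq_seq_dim[OF A] A unfolding mat_rank_def subrank_def by simp
qed

lemma mat_rank_le_dim:
  fixes A :: "'a::field mat"
  assumes "A \<in> carrier_mat n m"
  shows "mat_rank A \<le> min n m"
  using subrank_le_card_rows[of "{..<n}" "\<lambda>i j. A $$ (i, j)" "{..<m}"]
    subrank_le_card_cols[of "{..<m}" "\<lambda>i j. A $$ (i, j)" "{..<n}"]
  by (simp add: mat_rank_eq_subrank[OF assms])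

section \<open>Convex integer sequences with a subadditivity bound\<close>

lemma convex_seq_eventually_linear:
  fixes f :: "nat \<Rightarrow> nat"
  assumes f0: "f 0 = 0"
    and mono: "\<And>k. f k \<le> f (Suc k)"
    and convex: "\<And>k. f (Suc k) + f (Suc k) \<le> f (Suc (Suc k)) + f k"
    and bounded: "\<And>k. f (Suc k) \<le> f k + m"
  obtains d J where "d \<le> m" "f J + J \<le> d * J" "\<And>k. J \<le> k \<Longrightarrow> f k = f J + d * (k - J)"
proof -
  define \<delta> where "\<delta> k = f (Suc k) - f k" for k
  have f_Suc: "f (Suc k) = f k + \<delta> k" for k using mono[of k] unfolding \<delta>_def by simp
  have "\<delta> k \<le> \<delta> (Suc k)" for k using convex[of k] f_Suc[of k] f_Suc[of "Suc k"] by simp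
  then have \<delta>_mono: "j \<le> k \<Longrightarrow> \<delta> j \<le> \<delta> k" for j k by (rule lift_Suc_mono_le)
  have \<delta>_le: "\<delta> k \<le> m" for k using bounded[of k] f_Suc[of k] by simp
  define d where "d = Max (range \<delta>)"
  have fin: "finite (range \<delta>)" using \<delta>_le by (auto intro: finite_subset[of _ "{..m}"])
  have \<delta>_le_d: "\<delta> k \<le> d" for k unfolding d_def by (rule Max_ge[OF fin]) simp
  have "d \<in> range \<delta>" unfolding d_def by (rule Max_in[OF fin]) simp
  then obtain K where K: "\<delta> K = d" by auto
  define J where "J = (LEAST j. \<delta> j = d)"
  have \<delta>_J: "\<delta> J = d" unfolding J_def using K by (rule LeastI)
  have \<delta>_after: "\<delta> k = d" if "J \<le> k" for k using \<delta>_mono[OF that] \<delta>_J \<delta>_le_d[of k] by simp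
  have \<delta>_before: "\<delta> j < d" if "j < J" for j
    using not_less_Least[of j "\<lambda>j. \<delta> j = d"] that \<delta>_le_d[of j] unfolding J_def by fastforce
  have "f j + j \<le> d * j" if "j \<le> J" for j
    using that
  proof (induction j)
    case (Suc j)
    then show ?case using \<delta>_before[of j] f_Suc[of j] by simp
  qed (simp add: f0)
  moreover have "f k = f J + d * (k - J)" if "J \<le> k" for k
    using that
  proof (induction k rule: dec_induct)
    case (step k)
    then show ?case using f_Suc[of k] \<delta>_after[of k] by (simp add: Suc_diff_le)
  qed simp
  ultimately show thesis using that \<delta>_le[of K] K by blast
qed

text \<open>Iterating subadditivity gives \<open>f (n s) \<le> n f (s + c)\<close>, which must keep up with the slope
  \<open>d\<close> of the linear tail for large \<open>n\<close>.\<close>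

lemma slope_le_if_subadditive:
  fixes f :: "nat \<Rightarrow> nat"
  assumes f0: "f 0 = 0"
    and tail: "\<And>k. K \<le> k \<Longrightarrow> f k = f K + d * (k - K)"
    and sub: "\<And>a b. f (a + b) \<le> f a + f (b + c)"
  shows "d * k \<le> f k + d * c"
proof (cases "k \<le> c")
  case True
  then show ?thesis by (simp add: trans_le_add2)
next
  case False
  define s where "s = k - c"
  have k: "k = s + c" and s: "s \<ge> 1" using False unfolding s_def by auto
  have iterate: "f (n * s) \<le> n * f (s + c)" for n
  proof (induction n)
    case (Suc n)
    have "f (Suc n * s) = f (n * s + s)" by (simp add: add.commute)
    also have "\<dots> \<le> f (n * s) + f (s + c)" by (rule sub)
    finally show ?case using Suc by simp
  qed (simp add: f0)
  have "d * s \<le> f (s + c)"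
  proof (rule ccontr)
    define X where "X = f (s + c)"
    assume "\<not> d * s \<le> f (s + c)"
    then have X: "X + 1 \<le> d * s" unfolding X_def by simp
    then have "d \<ge> 1" by (cases d) auto
    define n where "n = d * K + 1"
    have "K \<le> d * K" using \<open>d \<ge> 1\<close> by simp
    also have "\<dots> < n" unfolding n_def by simp
    also have "n \<le> n * s" using s by simp
    finally have "d * (n * s) \<le> f (n * s) + d * K"
      using tail[of "n * s"] by (simp add: diff_mult_distrib2)
    moreover have "f (n * s) \<le> n * X" unfolding X_def by (rule iterate)
    moreover have "n * X + n \<le> d * (n * s)"
      using mult_le_mono2[OF X, of n] by (simp add: algebra_simps)
    ultimately have "n \<le> d * K" by linarith
    then show False unfolding n_def by simp
  qed
  then show ?thesis using k by (simp add: algebra_simps)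
qed

lemma convex_subadditive_eventually_linear:
  fixes f :: "nat \<Rightarrow> nat"
  assumes f0: "f 0 = 0"
    and mono: "\<And>k. f k \<le> f (Suc k)"
    and convex: "\<And>k. f (Suc k) + f (Suc k) \<le> f (Suc (Suc k)) + f k"
    and bounded: "\<And>k. f (Suc k) \<le> f k + m"
    and sub: "\<And>a b. f (a + b) \<le> f a + f (b + c)"
  shows "\<exists>d::nat. \<exists>a::int. \<exists>k0. k0 \<le> c * m \<and> (\<forall>k\<ge>k0. int (f k) = int d * int k + a)"
proof -
  obtain d J where d: "d \<le> m" and J: "f J + J \<le> d * J"
    and tail: "\<And>k. J \<le> k \<Longrightarrow> f k = f J + d * (k - J)"
    using convex_seq_eventually_linear[OF f0 mono convex bounded] by blast
  have "d * J \<le> f J + d * c" using slope_le_if_subadditive[OF f0 tail sub] .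
  then have "J \<le> d * c" using J by linarith
  also have "\<dots> \<le> c * m" using d by (simp add: mult.commute)
  finally have "J \<le> c * m" .
  moreover have "int (f k) = int d * int k + (int (f J) - int d * int J)" if "J \<le> k" for k
  proof -
    have "int (f k) = int (f J) + int d * int (k - J)" using tail[OF that] by simp
    then show ?thesis using that by (simp add: of_nat_diff algebra_simps)
  qed
  ultimately show ?thesis by blast
qed

section \<open>The block band matrices \<open>N\<^sub>k\<close>\<close>

text \<open>Entries of the infinite block band matrix whose leading \<open>k p \<times> k q\<close> corner is \<open>N\<^sub>k\<close>.\<close>

definition Ninf :: "('a::field \<Rightarrow> 'a) \<Rightarrow> (nat \<Rightarrow> 'a mat) \<Rightarrow> nat \<Rightarrow> nat \<Rightarrow> nat \<Rightarrow> nat \<Rightarrow> nat \<Rightarrow> 'a" where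
  "Ninf \<sigma> E t p q i j = (let a = i div p; b = j div q in
      if b \<le> a \<and> a - b \<le> t - 1 then (\<sigma> ^^ a) (E (a - b + 1) $$ (i mod p, j mod q)) else 0)"

locale block_band =
  fixes \<sigma> :: "'a::field \<Rightarrow> 'a" and E :: "nat \<Rightarrow> 'a mat" and t p q :: nat
  assumes endo: "field_endo \<sigma>" and t: "t \<ge> 1"
    and E: "\<And>i. i \<in> {1..t} \<Longrightarrow> E i \<in> carrier_mat p q"
    and p: "p > 0" and q: "q > 0"
begin

abbreviation N :: "nat \<Rightarrow> nat \<Rightarrow> 'a" where
  "N \<equiv> Ninf \<sigma> E t p q"

definition r :: "nat \<Rightarrow> nat" where
  "r k = subrank N {..<k * p} {..<k * q}"

lemma field_hom_funpow: "field_hom (\<sigma> ^^ s)"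
  using field_hom_if_field_endo[OF field_endo_funpow[OF endo]] .

lemma N_zero_above: "i div p < j div q \<Longrightarrow> N i j = 0"
  unfolding Ninf_def Let_def by auto

lemma N_zero_below: "j div q + t \<le> i div p \<Longrightarrow> N i j = 0"
  unfolding Ninf_def Let_def using t by auto

lemma N_shift: "N (i + s * p) (j + s * q) = (\<sigma> ^^ s) (N i j)"
proof -
  interpret field_hom "\<sigma> ^^ s" by (rule field_hom_funpow)
  have "(\<sigma> ^^ (s + i div p)) x = (\<sigma> ^^ s) ((\<sigma> ^^ (i div p)) x)" for x
    by (simp add: funpow_add)
  then show ?thesis using p q unfolding Ninf_def Let_def by auto
qed

lemma subrank_N_shift:
  "subrank N {x + s * p..<y + s * p} {u + s * q..<v + s * q} = subrank N {x..<y} {u..<v}"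
proof -
  interpret field_hom "\<sigma> ^^ s" by (rule field_hom_funpow)
  have "subrank N {x + s * p..<y + s * p} {u + s * q..<v + s * q} =
        subrank (\<lambda>i j. N (i + s * p) (j + s * q)) {x..<y} {u..<v}"
    by (subst subrank_shift) simp_all
  also have "\<dots> = subrank N {x..<y} {u..<v}"
    unfolding N_shift by (rule subrank_hom) simp
  finally show ?thesis .
qed

lemma N_zero_right_of_corner: "i < a * p \<Longrightarrow> a * q \<le> j \<Longrightarrow> N i j = 0"
proof -
  assume "i < a * p" "a * q \<le> j"
  then have "i div p < a" "a \<le> j div q"
    using less_mult_imp_div_less div_less_iff_less_mult[OF q, of j a] by auto
  then show "N i j = 0" by (intro N_zero_above) simp
qed

lemma N_zero_below_corner: "j < s * q \<Longrightarrow> (s + (t - 1)) * p \<le> i \<Longrightarrow> N i j = 0"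
proof -
  assume "j < s * q" "(s + (t - 1)) * p \<le> i"
  then have "j div q < s" "s + (t - 1) \<le> i div p"
    using less_mult_imp_div_less div_less_iff_less_mult[OF p, of i "s + (t - 1)"] by auto
  then show "N i j = 0" using t by (intro N_zero_below) linarith
qed

lemma subrank_N_extra_cols: "a \<le> c \<Longrightarrow> subrank N {..<a * p} {..<c * q} = r a"
proof -
  assume "a \<le> c"
  then have aq: "a * q \<le> c * q" by (rule mult_le_mono1)
  have cols: "{..<c * q} = {..<a * q} \<union> {a * q..<c * q}"
    by (auto dest: less_le_trans[OF _ aq])
  have "\<forall>j\<in>{a * q..<c * q}. \<forall>i\<in>{..<a * p}. N i j = 0"
    by (intro ballI N_zero_right_of_corner[of _ a]) auto
  then show ?thesis unfolding r_def cols by (rule subrank_zero_cols) simp_all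
qed

lemma subrank_N_drop_first_block: "subrank N {..<Suc k * p} {q..<Suc k * q} = r k"
proof -
  have rows: "{..<Suc k * p} = {p..<Suc k * p} \<union> {..<p}" by auto
  have "\<forall>i\<in>{..<p}. \<forall>j\<in>{q..<Suc k * q}. N i j = 0"
    by (intro ballI N_zero_right_of_corner[of _ 1]) auto
  then have "subrank N {..<Suc k * p} {q..<Suc k * q} = subrank N {p..<Suc k * p} {q..<Suc k * q}"
    unfolding rows by (rule subrank_zero_rows)
  also have "\<dots> = subrank N {0 + 1 * p..<k * p + 1 * p} {0 + 1 * q..<k * q + 1 * q}"
    by (simp add: add.commute)
  also have "\<dots> = r k" unfolding subrank_N_shift r_def by (simp add: atLeast0LessThan)
  finally show ?thesis .
qed

lemma r_0: "r 0 = 0"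
  using subrank_le_card_cols[of "{}" N "{}"] by (simp add: r_def)

lemma r_Suc_mono: "r k \<le> r (Suc k)"
proof -
  have "r k = subrank N {..<k * p} {..<Suc k * q}" by (rule subrank_N_extra_cols[symmetric]) simp
  also have "\<dots> \<le> r (Suc k)" unfolding r_def by (rule subrank_mono_rows) auto
  finally show ?thesis .
qed

lemma r_mono: "k \<le> k' \<Longrightarrow> r k \<le> r k'"
  by (rule lift_Suc_mono_le[of r, OF r_Suc_mono])

text \<open>Take \<open>subrank_exchange\<close> in \<open>N\<^sub>k\<^sub>+\<^sub>2\<close> with \<open>R\<close> the first \<open>k + 1\<close> block rows and \<open>C\<close> all
  but the first block column: each of the four submatrices is a corner or a translate of one.\<close>

lemma r_convex: "r (Suc k) + r (Suc k) \<le> r (Suc (Suc k)) + r k"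
proof -
  let ?K = "Suc k"
  have "subrank N {..<?K * p} {..<Suc ?K * q} + subrank N {..<Suc ?K * p} {q..<Suc ?K * q}
        \<le> subrank N {..<Suc ?K * p} {..<Suc ?K * q} + subrank N {..<?K * p} {q..<Suc ?K * q}"
    by (rule subrank_exchange) auto
  moreover have "subrank N {..<?K * p} {q..<Suc ?K * q} = r k"
  proof -
    have cols: "{q..<Suc ?K * q} = {q..<?K * q} \<union> {?K * q..<Suc ?K * q}" by auto
    have "\<forall>j\<in>{?K * q..<Suc ?K * q}. \<forall>i\<in>{..<?K * p}. N i j = 0"
      by (intro ballI N_zero_right_of_corner[of _ ?K]) auto
    then have "subrank N {..<?K * p} {q..<Suc ?K * q} = subrank N {..<?K * p} {q..<?K * q}"
      unfolding cols by (rule subrank_zero_cols) simp_all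
    also have "\<dots> = r k" by (rule subrank_N_drop_first_block)
    finally show ?thesis .
  qed
  ultimately show ?thesis
    using subrank_N_extra_cols[of ?K "Suc ?K"] subrank_N_drop_first_block[of ?K]
    by (simp only: r_def[of "Suc ?K", symmetric] le_SucI order_refl)
qed

lemma r_Suc_le_p: "r (Suc k) \<le> r k + p"
proof -
  have rows: "{..<Suc k * p} = {..<k * p} \<union> {k * p..<Suc k * p}" by auto
  have "r (Suc k) \<le>
        subrank N {..<k * p} {..<Suc k * q} + subrank N {k * p..<Suc k * p} {..<Suc k * q}"
    unfolding r_def rows by (rule subrank_Un_rows_le) simp
  also have "subrank N {k * p..<Suc k * p} {..<Suc k * q} \<le> p"
    using subrank_le_card_rows[of "{k * p..<Suc k * p}"] by simp
  finally show ?thesis using subrank_N_extra_cols[of k "Suc k"] by simp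
qed

lemma r_Suc_le_q: "r (Suc k) \<le> r k + q"
proof -
  have cols: "{..<Suc k * q} = {q..<Suc k * q} \<union> {..<q}" by auto
  have "r (Suc k) \<le> subrank N {..<Suc k * p} {q..<Suc k * q} + card {..<q}"
    unfolding r_def cols by (rule subrank_Un_cols_le) simp_all
  then show ?thesis using subrank_N_drop_first_block[of k] by simp
qed

text \<open>Below the band, the block rows from \<open>a\<close> on only meet the last \<open>b + t - 1\<close> block columns.\<close>

lemma r_subadditive: "r (a + b) \<le> r a + r (b + (t - 1))"
proof -
  have rows: "{..<(a + b) * p} = {..<a * p} \<union> {a * p..<(a + b) * p}" by (auto simp: algebra_simps)
  have "r (a + b) \<le>
        subrank N {..<a * p} {..<(a + b) * q} + subrank N {a * p..<(a + b) * p} {..<(a + b) * q}"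
    unfolding r_def rows by (rule subrank_Un_rows_le) simp
  also have "subrank N {a * p..<(a + b) * p} {..<(a + b) * q} \<le> r (b + (t - 1))"
  proof (cases "a \<le> t - 1")
    case True
    have "subrank N {a * p..<(a + b) * p} {..<(a + b) * q} \<le> r (a + b)"
      unfolding r_def by (rule subrank_mono_rows) auto
    also have "\<dots> \<le> r (b + (t - 1))" by (rule r_mono) (use True in simp)
    finally show ?thesis .
  next
    case False
    define s where "s = a - (t - 1)"
    have a: "a = s + (t - 1)" using False unfolding s_def by simp
    have cols: "{..<(a + b) * q} = {s * q..<(a + b) * q} \<union> {..<s * q}"
      using a by (auto simp: algebra_simps)
    have "\<forall>j\<in>{..<s * q}. \<forall>i\<in>{a * p..<(a + b) * p}. N i j = 0"
      by (intro ballI N_zero_below_corner[of _ s]) (auto simp: a)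
    then have "subrank N {a * p..<(a + b) * p} {..<(a + b) * q} =
               subrank N {a * p..<(a + b) * p} {s * q..<(a + b) * q}"
      unfolding cols by (rule subrank_zero_cols) simp_all
    also have "\<dots> = subrank N {(t - 1) * p + s * p..<(b + (t - 1)) * p + s * p}
                             {0 + s * q..<(b + (t - 1)) * q + s * q}"
      using a by (simp add: algebra_simps)
    also have "\<dots> = subrank N {(t - 1) * p..<(b + (t - 1)) * p} {..<(b + (t - 1)) * q}"
      unfolding subrank_N_shift by (simp add: atLeast0LessThan)
    also have "\<dots> \<le> r (b + (t - 1))" unfolding r_def by (rule subrank_mono_rows) auto
    finally show ?thesis .
  qed
  finally show ?thesis using subrank_N_extra_cols[of a "a + b"] by simp
qed

lemma r_eventually_linear:
  "\<exists>d::nat. \<exists>a::int. \<exists>k0. k0 \<le> (t - 1) * min p q \<and> (\<forall>k\<ge>k0. int (r k) = int d * int k + a)"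
proof (rule convex_subadditive_eventually_linear[OF r_0 r_Suc_mono r_convex _ r_subadditive])
  show "r (Suc k) \<le> r k + min p q" for k using r_Suc_le_p[of k] r_Suc_le_q[of k] by simp
qed

lemma mat_rank_Nmat: "mat_rank (Nmat \<sigma> E t p q k) = r k"
proof -
  have "mat_rank (Nmat \<sigma> E t p q k) =
        subrank (\<lambda>i j. Nmat \<sigma> E t p q k $$ (i, j)) {..<k * p} {..<k * q}"
    by (rule mat_rank_eq_subrank) (simp add: Nmat_def)
  also have "\<dots> = r k"
    unfolding r_def
  proof (rule subrank_cong, intro ballI)
    fix i j assume "i \<in> {..<k * p}" "j \<in> {..<k * q}"
    moreover have "E (i div p - j div q + 1) \<in> carrier_mat p q"
      if "j div q \<le> i div p \<and> i div p - j div q \<le> t - 1"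
      using that t by (intro E) auto
    ultimately show "Nmat \<sigma> E t p q k $$ (i, j) = N i j"
      using p q unfolding Nmat_def Ninf_def Let_def twist_def by auto
  qed
  finally show ?thesis .
qed

end

theorem mainTheorem6:
  fixes \<sigma> :: "'a::field \<Rightarrow> 'a" and E :: "nat \<Rightarrow> 'a mat" and t p q :: nat
  assumes "field_endo \<sigma>"
    and "t \<ge> 1"
    and "\<And>i. i \<in> {1..t} \<Longrightarrow> E i \<in> carrier_mat p q"
  shows "\<exists>(d::nat) (a::int). \<exists>k0. k0 \<le> (t - 1) * (min p q + 2) \<and>
           (\<forall>k\<ge>k0. k \<ge> 1 \<longrightarrow> int (mat_rank (Nmat \<sigma> E t p q k)) = int d * int k + a)"
proof (cases "p = 0 \<or> q = 0")
  case True
  have "mat_rank (Nmat \<sigma> E t p q k) = 0" for k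
  proof -
    have "Nmat \<sigma> E t p q k \<in> carrier_mat (k * p) (k * q)" by (simp add: Nmat_def)
    then have "mat_rank (Nmat \<sigma> E t p q k) \<le> min (k * p) (k * q)" by (rule mat_rank_le_dim)
    then show ?thesis using True by auto
  qed
  then show ?thesis by (intro exI[of _ 0]) simp
next
  case False
  interpret block_band \<sigma> E t p q using assms False by unfold_locales auto
  obtain d a k0 where "k0 \<le> (t - 1) * min p q" and "\<forall>k\<ge>k0. int (r k) = int d * int k + a"
    using r_eventually_linear by blast
  then show ?thesis
    by (intro exI[of _ d] exI[of _ a] exI[of _ k0]) (auto simp: mat_rank_Nmat intro: le_trans)
qed

end
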